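(* Let $\Sigma$ be an alphabet and $A$ a nontrivial finite abelian group. There is no subgroup $G\le\llbracket\Sigma^{\mathbb{Z}}\rrbracket$ isomorphic to $\mathbb{Z}^2$ whose action is move-$A$ithful.
   Context: An alphabet is a finite set with at least two elements. $\llbracket\Sigma^{\mathbb{Z}}\rrbracket$ is the group of homeomorphisms $f$ of $\Sigma^{\mathbb{Z}}$ with a continuous cocycle $c_f:\Sigma^{\mathbb{Z}}\to\mathbb{Z}$ such that $f(x)=\sigma^{c_f(x)}(x)$, where $\sigma(x)_i=x_{i+1}$; for $g\in G$ write $c_g$ for its cocycle. For a finite abelian group $A$, the action of $G\le\llbracket\Sigma^{\mathbb{Z}}\rrbracket$ is move-$A$ithful if for every map $\beta:G\to A$ with finite nonempty support there exist $x\in\Sigma^{\mathbb{Z}}$ and $\gamma:\mathbb{Z}\to\mathrm{End}(A)$ with $\sum_{g\in G}\gamma(c_g(x))(\beta(g))\neq0_A$. *)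

theory Defs
  imports "HOL-Analysis.Analysis"
begin

definition shift_space :: "(int \<Rightarrow> 'a) topology" where
  "shift_space = product_topology (\<lambda>_::int. discrete_topology (UNIV::'a set)) UNIV"

text \<open>sigma^n, where sigma(x)_i = x_(i+1); so (sigma^n x)_i = x_(i+n).\<close>
definition shiftp :: "int \<Rightarrow> (int \<Rightarrow> 'a) \<Rightarrow> (int \<Rightarrow> 'a)" where
  "shiftp n x = (\<lambda>i. x (i + n))"

definition is_cocycle :: "((int \<Rightarrow> 'a) \<Rightarrow> (int \<Rightarrow> 'a)) \<Rightarrow> ((int \<Rightarrow> 'a) \<Rightarrow> int) \<Rightarrow> bool" where
  "is_cocycle f c \<longleftrightarrow> continuous_map shift_space (discrete_topology (UNIV::int set)) c
      \<and> (\<forall>x. f x = shiftp (c x) x)"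

definition tfg :: "((int \<Rightarrow> 'a) \<Rightarrow> (int \<Rightarrow> 'a)) set" where
  "tfg = {f. homeomorphic_map shift_space shift_space f \<and> (\<exists>c. is_cocycle f c)}"

text \<open>The cocycle c_f (unique, since aperiodic points are dense).\<close>
definition cocycle :: "((int \<Rightarrow> 'a) \<Rightarrow> (int \<Rightarrow> 'a)) \<Rightarrow> (int \<Rightarrow> 'a) \<Rightarrow> int" where
  "cocycle f = (SOME c. is_cocycle f c)"

definition is_endo :: "('b::ab_group_add \<Rightarrow> 'b) \<Rightarrow> bool" where
  "is_endo e \<longleftrightarrow> (\<forall>a b. e (a + b) = e a + e b)"

definition move_Aithful :: "'b::{ab_group_add,finite} itself \<Rightarrow> ((int \<Rightarrow> 'a) \<Rightarrow> (int \<Rightarrow> 'a)) set \<Rightarrow> bool" where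
  "move_Aithful _ G \<longleftrightarrow>
     (\<forall>\<beta> :: ((int \<Rightarrow> 'a) \<Rightarrow> (int \<Rightarrow> 'a)) \<Rightarrow> 'b.
        let S = {g \<in> G. \<beta> g \<noteq> 0} in
        finite S \<and> S \<noteq> {} \<longrightarrow>
        (\<exists>x \<gamma>. (\<forall>n. is_endo (\<gamma> n)) \<and> (\<Sum>g\<in>S. \<gamma> (cocycle g x) (\<beta> g)) \<noteq> 0))"

end

theory Submission
  imports Defs "HOL-Library.Groups_Big_Fun"
begin

text \<open>
  The cocycles of an action of \<open>\<int>\<^sup>2\<close> in the full group are bounded, say by \<open>R\<close> on the two
  generators. At an aperiodic point \<open>x\<close> the cocycle identity \<open>c\<^sub>u\<^sub>+\<^sub>t(x) = c\<^sub>u(t x) + c\<^sub>t(x)\<close>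
  holds, so on a box of side \<open>4R + 1\<close> the map \<open>v \<mapsto> c\<^sub>v(x)\<close> takes fewer values than the box
  has points, and \<open>x\<close> is fixed by some lexicographically positive \<open>s\<close> of a fixed finite set
  \<open>S\<close>. In the group ring \<open>A[\<int>\<^sup>2]\<close> put \<open>b = a \<Prod>\<^sub>t\<^sub>\<in>\<^sub>S (1 - t)\<close>; its coefficient at \<open>0\<close> is
  \<open>a \<noteq> 0\<close> because all \<open>t\<close> are positive. If \<open>t x = x\<close>, the cocycle identity shows that the
  factor \<open>1 - t\<close> makes the sum of coefficients over each fibre \<open>{v. c\<^sub>v(x) = n}\<close> vanish.
  This holds at aperiodic points, hence everywhere, since aperiodic points are dense and
  cocycles are locally constant. Applying endomorphisms fibrewise, every sum
  \<open>\<Sum>\<^sub>v \<gamma>(c\<^sub>v(x))(b v)\<close> vanishes, so \<open>\<beta> = b \<circ> \<phi>\<^sup>-\<^sup>1\<close> witnesses that the action is not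
  move-\<open>A\<close>ithful.
\<close>

section \<open>The shift space\<close>

definition aperiodic :: "(int \<Rightarrow> 'a) \<Rightarrow> bool" where
  "aperiodic x \<longleftrightarrow> inj (\<lambda>n. shiftp n x)"

lemma topspace_shift_space [simp]: "topspace (shift_space :: (int \<Rightarrow> 'a) topology) = UNIV"
  by (simp add: shift_space_def)

lemma shiftp_shiftp [simp]: "shiftp m (shiftp n x) = shiftp (m + n) x"
  by (simp add: shiftp_def ac_simps)

lemma shiftp_0 [simp]: "shiftp 0 x = x"
  by (simp add: shiftp_def)

lemma aperiodic_shiftp: "aperiodic x \<Longrightarrow> aperiodic (shiftp k x)"
  unfolding aperiodic_def inj_def by (metis add_right_cancel shiftp_shiftp)

lemma aperiodic_dense:
  assumes "CARD('a::finite) \<ge> 2" and "openin (shift_space :: (int \<Rightarrow> 'a) topology) U" and "x \<in> U"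
  shows "\<exists>y\<in>U. aperiodic y"
proof -
  obtain V where fin: "finite {i \<in> UNIV. V i \<noteq> topspace (discrete_topology (UNIV :: 'a set))}"
    and "x \<in> Pi\<^sub>E UNIV V" and VU: "Pi\<^sub>E UNIV V \<subseteq> U"
    using assms(2,3) unfolding shift_space_def openin_product_topology_alt by blast
  define W where "W = {i. V i \<noteq> UNIV}"
  have "finite W" using fin by (simp add: W_def)
  obtain a0 a1 :: 'a where "a0 \<noteq> a1"
  proof -
    have "\<not> card (UNIV :: 'a set) \<le> 1" using assms(1) by simp
    then show ?thesis using that by (auto simp: card_le_Suc0_iff_eq)
  qed
  define K where "K = Max (insert 0 W) + 2"
  have W_less_K: "i < K - 1" if "i \<in> W" for i
  proof -
    have "i \<le> Max (insert 0 W)" using \<open>finite W\<close> that by (intro Max_ge) auto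
    then show ?thesis unfolding K_def by linarith
  qed
  \<comment> \<open>Keep \<open>x\<close> on the finitely many constrained coordinates and put a single jump from
      \<open>a0\<close> to \<open>a1\<close> to the right of them; no nonzero shift preserves it.\<close>
  define y where "y = (\<lambda>i. if i \<in> W then x i else if i \<ge> K then a1 else a0)"
  have "y \<in> Pi\<^sub>E UNIV V"
    using \<open>x \<in> Pi\<^sub>E UNIV V\<close> by (auto simp: y_def W_def PiE_iff)
  then have "y \<in> U" using VU by blast
  moreover have "aperiodic y"
    unfolding aperiodic_def
  proof (rule injI, rule ccontr)
    fix p q :: int
    assume "shiftp p y = shiftp q y" and "p \<noteq> q"
    then have shifted: "y (i + p) = y (i + q)" for i
      unfolding shiftp_def by metis
    define d where "d = p - q"
    have periodic: "y (j + d) = y j" for j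
      using shifted[of "j - q"] by (simp add: d_def algebra_simps)
    have y_left: "y (K - 1) = a0" using W_less_K by (auto simp: y_def)
    have y_right: "j \<ge> K \<Longrightarrow> y j = a1" for j using W_less_K[of j] by (auto simp: y_def)
    consider "d > 0" | "d < 0" using \<open>p \<noteq> q\<close> unfolding d_def by linarith
    then show False
    proof cases
      case 1
      then show False using periodic[of "K - 1"] y_left y_right[of "K - 1 + d"] \<open>a0 \<noteq> a1\<close> by simp
    next
      case 2
      then show False using periodic[of "K - 1 - d"] y_left y_right[of "K - 1 - d"] \<open>a0 \<noteq> a1\<close> by simp
    qed
  qed
  ultimately show ?thesis by blast
qed

lemma compact_space_shift_space: "compact_space (shift_space :: (int \<Rightarrow> 'a::finite) topology)"
  by (simp add: shift_space_def compact_space_product_topology compact_space_discrete_topology)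

lemma continuous_map_int_bounded:
  assumes "continuous_map (shift_space :: (int \<Rightarrow> 'a::finite) topology)
      (discrete_topology UNIV) (c :: (int \<Rightarrow> 'a) \<Rightarrow> int)"
  shows "\<exists>R::nat. \<forall>x. \<bar>c x\<bar> \<le> int R"
proof -
  have "compactin (discrete_topology UNIV) (c ` topspace shift_space)"
    using image_compactin[OF _ assms] compact_space_shift_space unfolding compact_space_def by simp
  then have "finite (range c)" by (simp add: compactin_discrete_topology)
  then have bound: "\<bar>c x\<bar> \<le> Max (abs ` range c)" for x
    by (intro Max_ge) auto
  have "\<bar>c x\<bar> \<le> int (nat (Max (abs ` range c)))" for x
    using bound[of x] by linarith
  then show ?thesis by blast
qed

lemma openin_level_set:
  assumes "continuous_map X (discrete_topology UNIV) c"
  shows "openin X {y \<in> topspace X. c y = n}"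
  using openin_continuous_map_preimage[OF assms, of "{n}"] by simp

lemma is_cocycle_cocycle: "f \<in> tfg \<Longrightarrow> is_cocycle f (cocycle f)"
  unfolding tfg_def cocycle_def by (auto intro: someI[where P = "is_cocycle f"])

section \<open>Finitely supported functions and fibre sums\<close>

lemma finite_support_translate:
  fixes b :: "'v::ab_group_add \<Rightarrow> 'b::zero"
  assumes "finite {v. b v \<noteq> 0}"
  shows "finite {v. b (v - t) \<noteq> 0}"
proof -
  have "{v. b (v - t) \<noteq> 0} = (\<lambda>u. u + t) ` {u. b u \<noteq> 0}"
    by (auto simp: image_iff) (metis diff_add_cancel)
  then show ?thesis using assms by simp
qed

lemma Sum_any_diff:
  fixes f g :: "'c \<Rightarrow> 'b::ab_group_add"
  assumes "finite {v. f v \<noteq> 0}" and "finite {v. g v \<noteq> 0}"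
  shows "Sum_any (\<lambda>v. f v - g v) = Sum_any f - Sum_any g"
proof -
  let ?A = "{v. f v \<noteq> 0} \<union> {v. g v \<noteq> 0}"
  have "Sum_any (\<lambda>v. f v - g v) = (\<Sum>v\<in>?A. f v - g v)"
    and "Sum_any f = sum f ?A" and "Sum_any g = sum g ?A"
    using assms by (auto intro: Sum_any.expand_superset)
  then show ?thesis by (simp add: sum_subtractf)
qed

definition fibre_sum :: "('v \<Rightarrow> 'k) \<Rightarrow> ('v \<Rightarrow> 'b::comm_monoid_add) \<Rightarrow> 'k \<Rightarrow> 'b" where
  "fibre_sum d b n = Sum_any (\<lambda>v. if d v = n then b v else 0)"

lemma is_endo_0: "is_endo e \<Longrightarrow> e 0 = 0"
  unfolding is_endo_def by (metis add.right_neutral add_left_cancel)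

lemma is_endo_sum: "is_endo e \<Longrightarrow> e (sum f A) = (\<Sum>x\<in>A. e (f x))"
  by (induction A rule: infinite_finite_induct) (auto simp: is_endo_0 is_endo_def)

lemma sum_endo_eq_0_if_fibre_sums_eq_0:
  assumes "finite V" and support: "\<And>v. b v \<noteq> 0 \<Longrightarrow> v \<in> V"
    and fibres: "\<And>n. fibre_sum d b n = 0" and endo: "\<And>n. is_endo (\<gamma> n)"
  shows "(\<Sum>v\<in>V. \<gamma> (d v) (b v)) = 0"
proof -
  have "(\<Sum>v\<in>{v\<in>V. d v = n}. \<gamma> (d v) (b v)) = 0" for n
  proof -
    have "(\<Sum>v\<in>{v\<in>V. d v = n}. \<gamma> (d v) (b v)) = \<gamma> n (\<Sum>v\<in>{v\<in>V. d v = n}. b v)"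
      by (simp add: is_endo_sum[OF endo])
    also have "(\<Sum>v\<in>{v\<in>V. d v = n}. b v) = fibre_sum d b n"
      unfolding fibre_sum_def sum.inter_filter[OF \<open>finite V\<close>]
      using \<open>finite V\<close> support by (intro Sum_any.expand_superset [symmetric]) auto
    finally show ?thesis by (simp add: fibres is_endo_0[OF endo])
  qed
  then show ?thesis using sum.image_gen[OF \<open>finite V\<close>, of "\<lambda>v. \<gamma> (d v) (b v)" d] by simp
qed

lemma not_move_Aithful_range:
  fixes \<phi> :: "'v \<Rightarrow> (int \<Rightarrow> 'a) \<Rightarrow> (int \<Rightarrow> 'a)" and b :: "'v \<Rightarrow> 'b::{ab_group_add,finite}"
  assumes "inj \<phi>" and "finite {v. b v \<noteq> 0}" and "b v0 \<noteq> 0"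
    and fibres: "\<And>x n. fibre_sum (\<lambda>v. cocycle (\<phi> v) x) b n = 0"
  shows "\<not> move_Aithful TYPE('b) (range \<phi>)"
proof
  define V where "V = {v. b v \<noteq> 0}"
  define \<beta> where "\<beta> = b \<circ> inv \<phi>"
  have S: "{g \<in> range \<phi>. \<beta> g \<noteq> 0} = \<phi> ` V"
    using \<open>inj \<phi>\<close> by (auto simp: \<beta>_def V_def)
  assume "move_Aithful TYPE('b) (range \<phi>)"
  then have "finite (\<phi> ` V) \<and> \<phi> ` V \<noteq> {} \<longrightarrow>
      (\<exists>x \<gamma>. (\<forall>n. is_endo (\<gamma> n)) \<and> (\<Sum>g\<in>\<phi> ` V. \<gamma> (cocycle g x) (\<beta> g)) \<noteq> 0)"
    unfolding move_Aithful_def Let_def S[symmetric] by blast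
  moreover have "finite (\<phi> ` V)" and "\<phi> ` V \<noteq> {}"
    using assms(2,3) by (auto simp: V_def)
  ultimately obtain x \<gamma> where endo: "\<forall>n. is_endo (\<gamma> n)"
    and "(\<Sum>g\<in>\<phi> ` V. \<gamma> (cocycle g x) (\<beta> g)) \<noteq> 0"
    by blast
  moreover have "(\<Sum>g\<in>\<phi> ` V. \<gamma> (cocycle g x) (\<beta> g)) = (\<Sum>v\<in>V. \<gamma> (cocycle (\<phi> v) x) (b v))"
    using \<open>inj \<phi>\<close> by (simp add: sum.reindex inj_on_subset \<beta>_def)
  moreover have "(\<Sum>v\<in>V. \<gamma> (cocycle (\<phi> v) x) (b v)) = 0"
    using assms(2) fibres endo by (intro sum_endo_eq_0_if_fibre_sums_eq_0) (auto simp: V_def)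
  ultimately show False by simp
qed

section \<open>A product of differences in the group ring\<close>

definition lex_positive :: "int \<times> int \<Rightarrow> bool" where
  "lex_positive s \<longleftrightarrow> fst s > 0 \<or> (fst s = 0 \<and> snd s > 0)"

lemma lex_positive_add: "lex_positive u \<Longrightarrow> lex_positive w \<Longrightarrow> lex_positive (u + w)"
  unfolding lex_positive_def by auto

lemma lex_positive_or_uminus: "s \<noteq> 0 \<Longrightarrow> lex_positive s \<or> lex_positive (- s)"
  unfolding lex_positive_def by (cases s) (auto simp: zero_prod_def)

text \<open>\<open>difference_product a L\<close> is the element \<open>a \<Prod>\<^sub>t\<^sub>\<in>\<^sub>L (1 - t)\<close> of the group ring \<open>A[V]\<close>.\<close>

fun difference_product :: "'b::ab_group_add \<Rightarrow> 'v::ab_group_add list \<Rightarrow> 'v \<Rightarrow> 'b" where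
  "difference_product a [] v = (if v = 0 then a else 0)"
| "difference_product a (t # L) v = difference_product a L v - difference_product a L (v - t)"

lemma finite_support_difference_product: "finite {v. difference_product a L v \<noteq> 0}"
proof (induction L)
  case (Cons t L)
  have "{v. difference_product a (t # L) v \<noteq> 0}
      \<subseteq> {v. difference_product a L v \<noteq> 0} \<union> {v. difference_product a L (v - t) \<noteq> 0}"
    by auto
  then show ?case by (rule finite_subset) (simp add: Cons.IH finite_support_translate)
qed simp

lemma difference_product_lex_negative:
  "\<forall>t\<in>set L. lex_positive t \<Longrightarrow> lex_positive (- v) \<Longrightarrow> difference_product a L v = 0"
proof (induction L arbitrary: v)
  case (Cons t L)
  have "lex_positive (- (v - t))"
    using lex_positive_add[of "- v" t] Cons.prems by (simp add: algebra_simps)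
  then show ?case using Cons by simp
qed (auto simp: lex_positive_def)

lemma difference_product_0: "\<forall>t\<in>set L. lex_positive t \<Longrightarrow> difference_product a L 0 = a"
  by (induction L) (simp_all add: difference_product_lex_negative)

section \<open>Actions of \<open>\<int>\<^sup>2\<close> in the full group\<close>

locale full_group_Z2_action =
  fixes \<phi> :: "int \<times> int \<Rightarrow> (int \<Rightarrow> 'a::finite) \<Rightarrow> (int \<Rightarrow> 'a)"
  assumes card_ge_2: "CARD('a) \<ge> 2"
    and range_subset_tfg: "range \<phi> \<subseteq> tfg"
    and hom: "\<forall>m n p q. \<phi> (m + p, n + q) = \<phi> (m, n) \<circ> \<phi> (p, q)"
begin

definition coc :: "(int \<Rightarrow> 'a) \<Rightarrow> int \<times> int \<Rightarrow> int" where
  "coc x v = cocycle (\<phi> v) x"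

lemma phi_add: "\<phi> (u + v) x = \<phi> u (\<phi> v x)"
  using hom by (cases u, cases v) simp

lemma phi_commute: "\<phi> u (\<phi> v x) = \<phi> v (\<phi> u x)"
  by (metis add.commute phi_add)

lemma inj_phi: "inj (\<phi> v)"
  using range_subset_tfg homeomorphic_imp_injective_map unfolding tfg_def by fastforce

lemma phi_0: "\<phi> 0 x = x"
  using inj_phi[of 0] phi_add[of 0 0 x] by (simp add: inj_eq)

lemma phi_uminus_fixed: "\<phi> s x = x \<Longrightarrow> \<phi> (- s) x = x"
  by (metis phi_0 phi_add add.left_inverse)

lemma is_cocycle_coc: "is_cocycle (\<phi> v) (\<lambda>x. coc x v)"
  using is_cocycle_cocycle range_subset_tfg unfolding coc_def by blast

lemma phi_eq_shiftp: "\<phi> v x = shiftp (coc x v) x"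
  using is_cocycle_coc unfolding is_cocycle_def by blast

lemma continuous_map_coc: "continuous_map shift_space (discrete_topology UNIV) (\<lambda>x. coc x v)"
  using is_cocycle_coc unfolding is_cocycle_def by blast

lemma aperiodic_phi: "aperiodic x \<Longrightarrow> aperiodic (\<phi> v x)"
  by (simp add: phi_eq_shiftp aperiodic_shiftp)

lemma coc_add: "aperiodic x \<Longrightarrow> coc x (u + t) = coc (\<phi> t x) u + coc x t"
  using phi_add[of u t x] unfolding aperiodic_def inj_def by (simp add: phi_eq_shiftp)

lemma coc_eq_0_if_fixed: "aperiodic x \<Longrightarrow> \<phi> t x = x \<Longrightarrow> coc x t = 0"
  using phi_eq_shiftp[of t x] unfolding aperiodic_def inj_def by (metis shiftp_0)

lemma coc_generators_bounded: "\<exists>R::nat. \<forall>x. \<bar>coc x (1, 0)\<bar> \<le> int R \<and> \<bar>coc x (0, 1)\<bar> \<le> int R"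
proof -
  obtain R1 :: nat where R1: "\<And>x. \<bar>coc x (1, 0)\<bar> \<le> int R1"
    using continuous_map_int_bounded[OF continuous_map_coc] by blast
  obtain R2 :: nat where R2: "\<And>x. \<bar>coc x (0, 1)\<bar> \<le> int R2"
    using continuous_map_int_bounded[OF continuous_map_coc] by blast
  have "\<bar>coc x (1, 0)\<bar> \<le> int (R1 + R2) \<and> \<bar>coc x (0, 1)\<bar> \<le> int (R1 + R2)" for x
    using R1[of x] R2[of x] by (meson le_add1 le_add2 of_nat_mono order_trans)
  then show ?thesis by blast
qed

lemma coc_box_bound:
  assumes R: "\<forall>x. \<bar>coc x (1, 0)\<bar> \<le> int R \<and> \<bar>coc x (0, 1)\<bar> \<le> int R" and "aperiodic x"
  shows "\<bar>coc x (int m, int n)\<bar> \<le> int (m + n) * int R"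
proof (induction m)
  case 0
  show ?case
  proof (induction n)
    case 0
    show ?case using coc_eq_0_if_fixed[OF \<open>aperiodic x\<close> phi_0] by (simp add: zero_prod_def)
  next
    case (Suc n)
    have "coc x (0, int (Suc n)) = coc (\<phi> (0, int n) x) (0, 1) + coc x (0, int n)"
      using coc_add[OF \<open>aperiodic x\<close>, of "(0, 1)" "(0, int n)"] by simp
    moreover have "\<bar>coc (\<phi> (0, int n) x) (0, 1)\<bar> \<le> int R" using R by blast
    ultimately show ?case using Suc by (simp add: algebra_simps abs_le_iff)
  qed
next
  case (Suc m)
  have "coc x (int (Suc m), int n) = coc (\<phi> (int m, int n) x) (1, 0) + coc x (int m, int n)"
    using coc_add[OF \<open>aperiodic x\<close>, of "(1, 0)" "(int m, int n)"] by simp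
  moreover have "\<bar>coc (\<phi> (int m, int n) x) (1, 0)\<bar> \<le> int R" using R by blast
  ultimately show ?case using Suc by (simp add: algebra_simps abs_le_iff)
qed

lemma exists_nonzero_stabiliser:
  assumes R: "\<forall>x. \<bar>coc x (1, 0)\<bar> \<le> int R \<and> \<bar>coc x (0, 1)\<bar> \<le> int R" and "aperiodic x"
  defines "N \<equiv> 4 * R + 1"
  shows "\<exists>s. s \<noteq> 0 \<and> \<bar>fst s\<bar> \<le> int N \<and> \<bar>snd s\<bar> \<le> int N \<and> \<phi> s x = x"
proof -
  define B where "B = {0..N} \<times> {0..N}"
  define f where "f = (\<lambda>p::nat \<times> nat. coc x (int (fst p), int (snd p)))"
  define M where "M = 2 * int N * int R"
  have "f ` B \<subseteq> {-M..M}"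
  proof
    fix y assume "y \<in> f ` B"
    then obtain p where p: "p \<in> B" "y = f p" by blast
    have "\<bar>f p\<bar> \<le> int (fst p + snd p) * int R"
      unfolding f_def using coc_box_bound[OF R \<open>aperiodic x\<close>] by blast
    also have "\<dots> \<le> int (2 * N) * int R"
      using p(1) unfolding B_def by (intro mult_right_mono) auto
    finally show "y \<in> {-M..M}" using p(2) unfolding M_def by auto
  qed
  \<comment> \<open>The box has \<open>(N + 1)\<^sup>2\<close> points but \<open>f\<close> takes at most \<open>4 N R + 1\<close> values.\<close>
  then have "card (f ` B) \<le> nat (2 * M + 1)"
    using card_mono[of "{-M..M}"] by simp
  also have "\<dots> < card B"
    unfolding M_def N_def B_def by (simp add: card_cartesian_product nat_add_distrib nat_mult_distrib algebra_simps)
  finally obtain p q where "p \<in> B" "q \<in> B" "p \<noteq> q" "f p = f q"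
    using pigeonhole unfolding inj_on_def by blast
  define v where "v = (int (fst p), int (snd p))"
  define w where "w = (int (fst q), int (snd q))"
  have "\<phi> w (\<phi> (v - w) x) = \<phi> w x"
    using \<open>f p = f q\<close> phi_add[of w "v - w" x] by (simp add: f_def v_def w_def phi_eq_shiftp)
  then have "\<phi> (v - w) x = x" using inj_phi[of w] by (simp add: inj_eq)
  moreover have "v - w \<noteq> 0" using \<open>p \<noteq> q\<close> by (auto simp: v_def w_def prod_eq_iff)
  moreover have "\<bar>fst (v - w)\<bar> \<le> int N \<and> \<bar>snd (v - w)\<bar> \<le> int N"
    using \<open>p \<in> B\<close> \<open>q \<in> B\<close> by (auto simp: v_def w_def B_def)
  ultimately show ?thesis by blast
qed

lemma fibre_sum_difference:
  fixes b :: "int \<times> int \<Rightarrow> 'b::ab_group_add"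
  assumes "aperiodic x" and "finite {v. b v \<noteq> 0}"
  shows "fibre_sum (coc x) (\<lambda>v. b v - b (v - t)) n
    = fibre_sum (coc x) b n - fibre_sum (coc (\<phi> t x)) b (n - coc x t)"
proof -
  have "fibre_sum (coc x) (\<lambda>v. b v - b (v - t)) n
      = Sum_any (\<lambda>v. (if coc x v = n then b v else 0) - (if coc x v = n then b (v - t) else 0))"
    unfolding fibre_sum_def by (intro Sum_any.cong) simp
  also have "\<dots> = fibre_sum (coc x) b n - Sum_any (\<lambda>v. if coc x v = n then b (v - t) else 0)"
  proof -
    have "finite {v. (if coc x v = n then b v else 0) \<noteq> 0}"
      by (rule finite_subset[OF _ assms(2)]) auto
    moreover have "finite {v. (if coc x v = n then b (v - t) else 0) \<noteq> 0}"
      by (rule finite_subset[OF _ finite_support_translate[OF assms(2)]]) auto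
    ultimately show ?thesis unfolding fibre_sum_def by (rule Sum_any_diff)
  qed
  also have "Sum_any (\<lambda>v. if coc x v = n then b (v - t) else 0)
      = Sum_any (\<lambda>u. if coc x (u + t) = n then b u else 0)"
    by (rule Sum_any.reindex_cong[OF bij_plus_right[of t]]) (auto simp: fun_eq_iff)
  also have "\<dots> = fibre_sum (coc (\<phi> t x)) b (n - coc x t)"
    unfolding fibre_sum_def by (rule Sum_any.cong) (auto simp: coc_add[OF assms(1)])
  finally show ?thesis .
qed

lemma fibre_sum_difference_product:
  "aperiodic x \<Longrightarrow> \<exists>t\<in>set L. \<phi> t x = x \<Longrightarrow> fibre_sum (coc x) (difference_product a L) n = 0"
proof (induction L arbitrary: x n)
  case (Cons t L)
  have "difference_product a (t # L) = (\<lambda>v. difference_product a L v - difference_product a L (v - t))"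
    by (rule ext) simp
  then have split: "fibre_sum (coc x) (difference_product a (t # L)) n
    = fibre_sum (coc x) (difference_product a L) n
      - fibre_sum (coc (\<phi> t x)) (difference_product a L) (n - coc x t)"
    using fibre_sum_difference[OF Cons.prems(1) finite_support_difference_product] by simp
  show ?case
  proof (cases "\<phi> t x = x")
    case True
    have "coc x t = 0" using coc_eq_0_if_fixed[OF Cons.prems(1) True] .
    then show ?thesis using True by (simp only: split diff_0_right diff_self)
  next
    case False
    then obtain s where "s \<in> set L" and "\<phi> s x = x" using Cons.prems(2) by auto
    moreover have "\<phi> s (\<phi> t x) = \<phi> t x" using \<open>\<phi> s x = x\<close> phi_commute[of s t x] by simp
    ultimately have "fibre_sum (coc x) (difference_product a L) n = 0"
      and "fibre_sum (coc (\<phi> t x)) (difference_product a L) (n - coc x t) = 0"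
      using Cons.IH Cons.prems(1) aperiodic_phi by blast+
    then show ?thesis by (simp only: split diff_self)
  qed
qed simp

lemma fibre_sum_eq_0_if_on_aperiodic:
  assumes "finite {v. b v \<noteq> 0}" and "\<And>y n. aperiodic y \<Longrightarrow> fibre_sum (coc y) b n = 0"
  shows "fibre_sum (coc x) b n = 0"
proof -
  define U where "U = (\<Inter>v\<in>{v. b v \<noteq> 0}. {y. coc y v = coc x v}) \<inter> topspace shift_space"
  have "openin shift_space U"
    unfolding U_def using assms(1) openin_level_set[OF continuous_map_coc] by (intro openin_INT) auto
  moreover have "x \<in> U" by (simp add: U_def)
  ultimately obtain y where "y \<in> U" and "aperiodic y"
    using aperiodic_dense[OF card_ge_2] by blast
  have agree: "coc y v = coc x v" if "b v \<noteq> 0" for v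
    using \<open>y \<in> U\<close> that unfolding U_def by blast
  have "fibre_sum (coc x) b n = fibre_sum (coc y) b n"
    unfolding fibre_sum_def
  proof (rule Sum_any.cong)
    show "(if coc x v = n then b v else 0) = (if coc y v = n then b v else 0)" for v
      using agree[of v] by (cases "b v = 0") auto
  qed
  then show ?thesis using assms(2)[OF \<open>aperiodic y\<close>] by simp
qed

lemma exists_fibre_annihilator:
  fixes a :: "'b::ab_group_add"
  shows "\<exists>b. finite {v. b v \<noteq> 0} \<and> b 0 = a \<and> (\<forall>x n. fibre_sum (coc x) b n = 0)"
proof -
  obtain R where R: "\<forall>x. \<bar>coc x (1, 0)\<bar> \<le> int R \<and> \<bar>coc x (0, 1)\<bar> \<le> int R"
    using coc_generators_bounded by blast
  define N where "N = int (4 * R + 1)"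
  define S where "S = {s. lex_positive s \<and> \<bar>fst s\<bar> \<le> N \<and> \<bar>snd s\<bar> \<le> N}"
  have "S \<subseteq> {-N..N} \<times> {-N..N}" by (auto simp: S_def)
  then have "finite S" by (rule finite_subset) simp
  then obtain L where L: "set L = S" using finite_list by blast
  have stabiliser: "\<exists>t\<in>set L. \<phi> t x = x" if aperiodic: "aperiodic x" for x
  proof -
    obtain s where "s \<noteq> 0" "\<bar>fst s\<bar> \<le> N" "\<bar>snd s\<bar> \<le> N" "\<phi> s x = x"
      using exists_nonzero_stabiliser[OF R aperiodic] unfolding N_def by blast
    then have "s \<in> S \<or> - s \<in> S" and "\<phi> (- s) x = x"
      using lex_positive_or_uminus phi_uminus_fixed by (auto simp: S_def)
    then show ?thesis using \<open>\<phi> s x = x\<close> L by blast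
  qed
  show ?thesis
  proof (intro exI conjI allI)
    show "finite {v. difference_product a L v \<noteq> 0}"
      by (rule finite_support_difference_product)
    show "difference_product a L 0 = a"
      using L by (intro difference_product_0) (auto simp: S_def)
    show "fibre_sum (coc x) (difference_product a L) n = 0" for x n
      by (rule fibre_sum_eq_0_if_on_aperiodic[OF finite_support_difference_product])
        (simp add: stabiliser fibre_sum_difference_product)
  qed
qed

end

theorem mainTheorem15:
  fixes \<phi> :: "int \<times> int \<Rightarrow> ((int \<Rightarrow> 'a::finite) \<Rightarrow> (int \<Rightarrow> 'a))"
  assumes "CARD('a) \<ge> 2"
    and "\<exists>a::'b::{ab_group_add,finite}. a \<noteq> 0"
    and "range \<phi> \<subseteq> tfg"
    and "inj \<phi>"
    and "\<forall>m n p q. \<phi> (m + p, n + q) = \<phi> (m, n) \<circ> \<phi> (p, q)"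
  shows "\<not> move_Aithful TYPE('b) (range \<phi>)"
proof -
  interpret full_group_Z2_action \<phi>
    using assms(1,3,5) by unfold_locales
  obtain a :: 'b where "a \<noteq> 0" using assms(2) by blast
  then obtain b :: "int \<times> int \<Rightarrow> 'b" where "finite {v. b v \<noteq> 0}" "b 0 \<noteq> 0"
    and "\<And>x n. fibre_sum (coc x) b n = 0"
    using exists_fibre_annihilator[of a] by auto
  then show ?thesis
    using not_move_Aithful_range[OF assms(4)] unfolding coc_def by blast
qed

end
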